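(* Let $d\ge1$ and $x,y,u,v\in\mathbb{R}^d_{>0}$, and set $a^\pm:=s^\pm(x,y)$, $b^\pm:=s^\pm(u,v)$. Then there exist $y^*,v^*\in\mathbb{R}^d_{>0}$ such that \[ F_d(x,y^*;u,v^* )\ge F_d(x,y;u,v),\qquad s^\pm(x,y^* )=s^\pm(x,y),\qquad s^\pm(u,v^* )=s^\pm(u,v), \] and for every $1\le i\le d$, $\frac{y^*_i}{x_i}\in\{a^-,a^+\}$ and $\frac{v^*_i}{u_i}\in\{b^-,b^+\}$.
   Context: For $x,y\in\mathbb{R}^d_{>0}$ define $s^+(x,y)=\max_i \frac{y_i}{x_i}$ and $s^-(x,y)=\min_i\frac{y_i}{x_i}$ (the statement $s^\pm(\cdot)=s^\pm(\cdot)$ means both the max and the min agree). Define $F_d:(\mathbb{R}^d_{>0})^4\to\mathbb{R}_{>0}$ by $F_d(x,y;u,v)=\frac{(x\cdot u)(y\cdot v)}{(x\cdot v)(y\cdot u)}$, where $\cdot$ is the standard Euclidean dot product. *)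

theory Defs
  imports "HOL-Analysis.Analysis"
begin

definition pos_vec :: "real ^ 'n \<Rightarrow> bool" where
  "pos_vec x \<longleftrightarrow> (\<forall>i. x $ i > 0)"

definition s_plus :: "real ^ 'n \<Rightarrow> real ^ 'n \<Rightarrow> real" where
  "s_plus x y = Max ((\<lambda>i. y $ i / x $ i) ` UNIV)"

definition s_minus :: "real ^ 'n \<Rightarrow> real ^ 'n \<Rightarrow> real" where
  "s_minus x y = Min ((\<lambda>i. y $ i / x $ i) ` UNIV)"

definition F_d :: "real ^ 'n \<Rightarrow> real ^ 'n \<Rightarrow> real ^ 'n \<Rightarrow> real ^ 'n \<Rightarrow> real" where
  "F_d x y u v = ((x \<bullet> u) * (y \<bullet> v)) / ((x \<bullet> v) * (y \<bullet> u))"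

end

theory Submission
  imports Defs
begin

text \<open>For fixed \<open>x, u, v\<close>, the value \<open>F_d x y u v\<close> depends on \<open>y\<close> only through the
  ratio \<open>(v \<bullet> y) / (u \<bullet> y)\<close> of two positive linear forms, and symmetrically it depends on \<open>v\<close>
  only through \<open>(y \<bullet> v) / (x \<bullet> v)\<close>. If \<open>R\<close> is the current value of a ratio \<open>(p \<bullet> w) / (q \<bullet> w)\<close>,
  the linear form \<open>p - R q\<close> vanishes at \<open>w\<close>; moving every coordinate \<open>w\<^sub>i\<close> to the end of
  its admissible interval \<open>[s\<^sup>- z\<^sub>i, s\<^sup>+ z\<^sub>i]\<close> singled out by the sign of \<open>(p - R q)\<^sub>i\<close> makes
  that form nonnegative, so the ratio does not decrease. Keeping one coordinate attaining
  each extreme ratio preserves \<open>s\<^sup>\<plusminus>\<close>. Rounding \<open>y\<close> first and then \<open>v\<close> gives the theorem.\<close>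

lemma pos_vec_inner_pos:
  fixes a b :: "real ^ 'n"
  assumes "pos_vec a" "pos_vec b"
  shows "0 < a \<bullet> b"
  unfolding inner_vec_def using assms by (intro sum_pos) (auto simp: pos_vec_def)

lemma ratio_le_s_plus: "y $ i / x $ i \<le> s_plus x y"
  unfolding s_plus_def by (rule Max_ge) auto

lemma s_minus_le_ratio: "s_minus x y \<le> y $ i / x $ i"
  unfolding s_minus_def by (rule Min_le) auto

lemma s_plus_attained:
  obtains i where "y $ i / x $ i = s_plus x y"
proof -
  have "s_plus x y \<in> range (\<lambda>i. y $ i / x $ i)"
    unfolding s_plus_def by (rule Max_in) auto
  then show ?thesis using that by auto
qed

lemma s_minus_attained:
  obtains i where "y $ i / x $ i = s_minus x y"
proof -
  have "s_minus x y \<in> range (\<lambda>i. y $ i / x $ i)"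
    unfolding s_minus_def by (rule Min_in) auto
  then show ?thesis using that by auto
qed

lemma s_plus_eqI:
  assumes "\<And>i. y $ i / x $ i \<le> M" and "y $ j / x $ j = M"
  shows "s_plus x y = M"
  unfolding s_plus_def using assms by (intro Max_eqI) auto

lemma s_minus_eqI:
  assumes "\<And>i. M \<le> y $ i / x $ i" and "y $ j / x $ j = M"
  shows "s_minus x y = M"
  unfolding s_minus_def using assms by (intro Min_eqI) auto

lemma s_minus_pos:
  assumes "pos_vec x" "pos_vec y"
  shows "0 < s_minus x y"
proof -
  obtain i where "y $ i / x $ i = s_minus x y" by (rule s_minus_attained)
  with assms show ?thesis by (metis divide_pos_pos pos_vec_def)
qed

lemma extremal_rounding_exists:
  fixes z w :: "real ^ 'n" and c :: "'n \<Rightarrow> real"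
  assumes z: "pos_vec z" and w: "pos_vec w"
  obtains w' where "pos_vec w'"
    "s_plus z w' = s_plus z w" "s_minus z w' = s_minus z w"
    "\<And>i. w' $ i / z $ i \<in> {s_minus z w, s_plus z w}"
    "\<And>i. 0 \<le> (w' $ i - w $ i) * c i"
proof -
  define hi where "hi = s_plus z w"
  define lo where "lo = s_minus z w"
  obtain imax where imax: "w $ imax / z $ imax = hi" unfolding hi_def by (rule s_plus_attained)
  obtain imin where imin: "w $ imin / z $ imin = lo" unfolding lo_def by (rule s_minus_attained)
  have zp: "0 < z $ i" for i using z by (simp add: pos_vec_def)
  have lo_pos: "0 < lo" unfolding lo_def using z w by (rule s_minus_pos)
  have lo_le_hi: "lo \<le> hi" unfolding lo_def hi_def by (meson order.trans ratio_le_s_plus s_minus_le_ratio)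
  define w' :: "real ^ 'n" where "w' = (\<chi> i. if i = imax \<or> i = imin then w $ i
        else if 0 \<le> c i then hi * z $ i else lo * z $ i)"
  have w'_pos: "pos_vec w'"
    using w zp lo_pos lo_le_hi unfolding pos_vec_def w'_def by auto
  have ratio_w': "w' $ i / z $ i = (if i = imax \<or> i = imin then w $ i / z $ i
      else if 0 \<le> c i then hi else lo)" for i
    unfolding w'_def using zp[of i] by auto
  have ratio_in: "w' $ i / z $ i \<in> {lo, hi}" for i
    unfolding ratio_w' using imax imin by auto
  have "w' $ i / z $ i \<le> hi" "lo \<le> w' $ i / z $ i" for i
    using ratio_in[of i] lo_le_hi by auto
  moreover have "w' $ imax / z $ imax = hi" "w' $ imin / z $ imin = lo"
    using ratio_w' imax imin by auto
  ultimately have "s_plus z w' = hi" "s_minus z w' = lo"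
    by (auto intro: s_plus_eqI s_minus_eqI)
  moreover have "0 \<le> (w' $ i - w $ i) * c i" for i
  proof -
    have "w $ i \<le> hi * z $ i" "lo * z $ i \<le> w $ i"
      using ratio_le_s_plus[of w i z] s_minus_le_ratio[of z w i] zp[of i]
      by (simp_all add: hi_def lo_def divide_le_eq le_divide_eq)
    then show ?thesis unfolding w'_def by (auto intro: mult_nonpos_nonpos)
  qed
  ultimately show ?thesis using that w'_pos ratio_in unfolding hi_def lo_def by blast
qed

lemma inner_ratio_le:
  fixes p q w w' :: "real ^ 'n"
  defines "R \<equiv> (p \<bullet> w) / (q \<bullet> w)"
  assumes "0 < q \<bullet> w" "0 < q \<bullet> w'" and "0 \<le> (w' - w) \<bullet> (p - R *\<^sub>R q)"
  shows "R \<le> (p \<bullet> w') / (q \<bullet> w')"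
proof -
  have "w \<bullet> (p - R *\<^sub>R q) = 0"
    using assms(2) by (simp add: R_def inner_diff_right inner_commute)
  with assms(4) have "0 \<le> w' \<bullet> p - R * (q \<bullet> w')"
    by (simp add: inner_diff_left inner_diff_right inner_commute algebra_simps)
  with assms(3) show ?thesis by (simp add: le_divide_eq inner_commute)
qed

lemma extremal_rounding_increases_ratio:
  fixes z w p q :: "real ^ 'n"
  assumes z: "pos_vec z" and w: "pos_vec w" and q: "pos_vec q"
  obtains w' where "pos_vec w'"
    "s_plus z w' = s_plus z w" "s_minus z w' = s_minus z w"
    "\<And>i. w' $ i / z $ i \<in> {s_minus z w, s_plus z w}"
    "(p \<bullet> w) / (q \<bullet> w) \<le> (p \<bullet> w') / (q \<bullet> w')"
proof -
  define d where "d = p - ((p \<bullet> w) / (q \<bullet> w)) *\<^sub>R q"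
  obtain w' where w': "pos_vec w'"
    "s_plus z w' = s_plus z w" "s_minus z w' = s_minus z w"
    "\<And>i. w' $ i / z $ i \<in> {s_minus z w, s_plus z w}"
    and sign: "\<And>i. 0 \<le> (w' $ i - w $ i) * d $ i"
    using extremal_rounding_exists[OF z w, of "\<lambda>i. d $ i"] by blast
  have "0 \<le> (w' - w) \<bullet> d"
    unfolding inner_vec_def using sign by (intro sum_nonneg) simp
  then have "(p \<bullet> w) / (q \<bullet> w) \<le> (p \<bullet> w') / (q \<bullet> w')"
    unfolding d_def using pos_vec_inner_pos[OF q w] pos_vec_inner_pos[OF q w'(1)]
    by (intro inner_ratio_le) auto
  with w' that show ?thesis by blast
qed

theorem mainTheorem6:
  fixes x y u v :: "real ^ 'n"
  assumes "pos_vec x" "pos_vec y" "pos_vec u" "pos_vec v"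
  shows "\<exists>ys vs :: real ^ 'n.
           pos_vec ys \<and> pos_vec vs \<and>
           F_d x ys u vs \<ge> F_d x y u v \<and>
           s_plus x ys = s_plus x y \<and> s_minus x ys = s_minus x y \<and>
           s_plus u vs = s_plus u v \<and> s_minus u vs = s_minus u v \<and>
           (\<forall>i. ys $ i / x $ i \<in> {s_minus x y, s_plus x y} \<and>
                vs $ i / u $ i \<in> {s_minus u v, s_plus u v})"
proof -
  obtain ys where ys: "pos_vec ys" "s_plus x ys = s_plus x y" "s_minus x ys = s_minus x y"
     "\<And>i. ys $ i / x $ i \<in> {s_minus x y, s_plus x y}"
     "(v \<bullet> y) / (u \<bullet> y) \<le> (v \<bullet> ys) / (u \<bullet> ys)"
    using extremal_rounding_increases_ratio[OF assms(1,2,3)] by blast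
  obtain vs where vs: "pos_vec vs" "s_plus u vs = s_plus u v" "s_minus u vs = s_minus u v"
     "\<And>i. vs $ i / u $ i \<in> {s_minus u v, s_plus u v}"
     "(ys \<bullet> v) / (x \<bullet> v) \<le> (ys \<bullet> vs) / (x \<bullet> vs)"
    using extremal_rounding_increases_ratio[OF assms(3,4,1)] by blast
  have pos: "0 < x \<bullet> u" "0 < x \<bullet> v" "0 < ys \<bullet> u"
    using pos_vec_inner_pos assms ys(1) by blast+
  have "F_d x y u v = ((x \<bullet> u) / (x \<bullet> v)) * ((v \<bullet> y) / (u \<bullet> y))"
    unfolding F_d_def by (simp add: inner_commute)
  also have "\<dots> \<le> ((x \<bullet> u) / (x \<bullet> v)) * ((v \<bullet> ys) / (u \<bullet> ys))"
    using ys(5) pos by (intro mult_left_mono) auto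
  also have "\<dots> = ((x \<bullet> u) / (ys \<bullet> u)) * ((ys \<bullet> v) / (x \<bullet> v))"
    by (simp add: inner_commute)
  also have "\<dots> \<le> ((x \<bullet> u) / (ys \<bullet> u)) * ((ys \<bullet> vs) / (x \<bullet> vs))"
    using vs(5) pos by (intro mult_left_mono) auto
  also have "\<dots> = F_d x ys u vs"
    unfolding F_d_def by (simp add: inner_commute)
  finally show ?thesis using ys vs by blast
qed

end
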